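(* Let the qubit HQMM be defined as follows. For each time $m\ge 0$, the hidden spaces are $\mathcal{H}_m\simeq\mathbb{C}^2$ with computational basis $\{|0\rangle_m,|1\rangle_m\}$ and the output space is $\mathcal{K}_m\simeq\mathbb{C}^2$ with orthonormal basis $\{|e_0\rangle_m,|e_1\rangle_m\}$. Let $U=\exp(-\mathrm{i}\tfrac{\theta}{2}\sigma_x)=\cos(\tfrac{\theta}{2})\mathbb{I}-\mathrm{i}\sin(\tfrac{\theta}{2})\sigma_x$ with $0<|\theta|<\pi$. The hidden transition expectation is $\mathcal{E}_{H;m}(X)=V_{H;m}^{*}XV_{H;m}$ for $X\in\mathcal{B}(\mathcal{H}_m\otimes\mathcal{H}_{m+1})$, with isometry $V_{H;m}|\psi\rangle_m=U|\psi\rangle_m\otimes|0\rangle_{m+1}$; the emission expectation is $\mathcal{E}_{H,O;m}(Y)=V_{H,O;m}^{*}YV_{H,O;m}$ for $Y\in\mathcal{B}(\mathcal{H}_m\otimes\mathcal{K}_m)$, with isometry $V_{H,O;m}|0\rangle_m=|0\rangle_m\otimes|e_0\rangle_m$, $V_{H,O;m}|1\rangle_m=|1\rangle_m\otimes|e_1\rangle_m$. The conventional block maps are $\mathcal{F}^{(m)}_{a_m,b_m}(X)=\mathcal{E}_{H;m}\bigl(\mathcal{E}_{H,O;m}(a_m\otimes b_m)\otimes X\bigr)$ and the causal block maps are $\mathcal{G}^{(m)}_{a_m,b_m}(X)=\mathcal{E}_{H,O;m}\bigl(\mathcal{E}_{H;m}(a_m\otimes X)\otimes b_m\bigr)$,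 for $a_m\in\mathcal{B}(\mathcal{H}_m)$, $b_m\in\mathcal{B}(\mathcal{K}_m)$, $X\in\mathcal{B}(\mathcal{H}_{m+1})$. Let the initial hidden state be $\phi_{H,0}(X)=\operatorname{Tr}(\rho_{H;0}X)$ with $\rho_{H;0}=|0\rangle_0\langle 0|$, and define the conventional and causal HQMM cylinder states by $\varphi_{H,O}\bigl(\bigotimes_{m=0}^n(a_m\otimes b_m)\bigr)=\phi_{H,0}\circ\mathcal{F}^{(0)}_{a_0,b_0}\circ\cdots\circ\mathcal{F}^{(n)}_{a_n,b_n}(\mathbb{I}_{H;n+1})$ and $\psi_{H,O}\bigl(\bigotimes_{m=0}^n(a_m\otimes b_m)\bigr)=\phi_{H,0}\circ\mathcal{G}^{(0)}_{a_0,b_0}\circ\cdots\circ\mathcal{G}^{(n)}_{a_n,b_n}(\mathbb{I}_{H;n+1})$. For the effect sequence \[ (a_0,b_0)=(\mathbb{I}_{\mathcal{H}_0},|e_0\rangle_0\langle e_0|), \qquad (a_m,b_m)=(\mathbb{I}_{\mathcal{H}_m},\mathbb{I}_{\mathcal{K}_m})\;\text{for all }m\ge 1, \] the conventional and causal HQMM cylinder states $\varphi_{H,O}$ and $\psi_{H,O}$ are different. In particular, there exists $n\ge 0$ and an event in the cylinder effect algebra for which the two probability assignments do not coincide.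
   Context: Hidden quantum Markov models (HQMMs) built from completely positive unital transition expectations $\mathcal{E}_{H;m}:\mathcal{B}(\mathcal{H}_m)\otimes\mathcal{B}(\mathcal{H}_{m+1})\to\mathcal{B}(\mathcal{H}_m)$ and emission expectations $\mathcal{E}_{H,O;m}:\mathcal{B}(\mathcal{H}_m)\otimes\mathcal{B}(\mathcal{K}_m)\to\mathcal{B}(\mathcal{H}_m)$, composed either in the conventional (emission–then–transition) order or the causal (transition–then–emission) order; the finite-time functionals extend to states on the quasi-local algebra $\bigotimes_{m\in\mathbb{N}}\mathcal{B}(\mathcal{H}_m)\otimes\mathcal{B}(\mathcal{K}_m)$. *)

theory Defs
  imports "HOL-Analysis.Analysis"
begin

text \<open>All spaces H_m, K_m are copies of C^2, indexed by the numeral type 2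
 (elements 0 and 1 = computational basis |0>,|1>, resp. |e_0>,|e_1>).
 Operators on C^2 are complex^2^2; operators on C^2 (x) C^2 are
 complex^(2*2)^(2*2); the first tensor factor is the first component.\<close>

type_synonym qop = "complex^2^2"
type_synonym qop2 = "complex^(2\<times>2)^(2\<times>2)"

definition adj :: "complex^'n^'m \<Rightarrow> complex^'m^'n" where
  "adj M = (\<chi> i j. cnj (M $ j $ i))"

definition kron :: "complex^'n^'m \<Rightarrow> complex^'q^'p \<Rightarrow> complex^('n\<times>'q)^('m\<times>'p)" where
  "kron A B = (\<chi> r c. A $ fst r $ fst c * B $ snd r $ snd c)"

definition ket :: "2 \<Rightarrow> complex^2" where
  "ket k = axis k 1"

definition outer :: "complex^2 \<Rightarrow> complex^2 \<Rightarrow> qop" where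
  "outer u v = (\<chi> i j. u $ i * cnj (v $ j))"

definition sigma_x :: qop where
  "sigma_x = (\<chi> i j. if i \<noteq> j then 1 else 0)"

definition Uop :: "real \<Rightarrow> qop" where
  "Uop \<theta> = (\<chi> i j. complex_of_real (cos (\<theta>/2)) * (mat 1 :: qop) $ i $ j
                     - \<i> * complex_of_real (sin (\<theta>/2)) * sigma_x $ i $ j)"

definition V_H :: "real \<Rightarrow> complex^2^(2\<times>2)" where
  "V_H \<theta> = (\<chi> r k. Uop \<theta> $ fst r $ k * ket 0 $ snd r)"

definition V_HO :: "complex^2^(2\<times>2)" where
  "V_HO = (\<chi> r k. ket k $ fst r * ket k $ snd r)"

definition E_H :: "real \<Rightarrow> qop2 \<Rightarrow> qop" where
  "E_H \<theta> X = adj (V_H \<theta>) ** X ** V_H \<theta>"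

definition E_HO :: "qop2 \<Rightarrow> qop" where
  "E_HO Y = adj V_HO ** Y ** V_HO"

definition F_blk :: "real \<Rightarrow> qop \<Rightarrow> qop \<Rightarrow> qop \<Rightarrow> qop" where
  "F_blk \<theta> a b X = E_H \<theta> (kron (E_HO (kron a b)) X)"

definition G_blk :: "real \<Rightarrow> qop \<Rightarrow> qop \<Rightarrow> qop \<Rightarrow> qop" where
  "G_blk \<theta> a b X = E_HO (kron (E_H \<theta> (kron a X)) b)"

definition rho0 :: qop where
  "rho0 = outer (ket 0) (ket 0)"

definition phi_H0 :: "qop \<Rightarrow> complex" where
  "phi_H0 X = trace (rho0 ** X)"

definition varphi_HO :: "real \<Rightarrow> (nat \<Rightarrow> qop) \<Rightarrow> (nat \<Rightarrow> qop) \<Rightarrow> nat \<Rightarrow> complex" where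
  "varphi_HO \<theta> a b n = phi_H0 (foldr (\<lambda>m X. F_blk \<theta> (a m) (b m) X) [0..<Suc n] (mat 1))"

definition psi_HO :: "real \<Rightarrow> (nat \<Rightarrow> qop) \<Rightarrow> (nat \<Rightarrow> qop) \<Rightarrow> nat \<Rightarrow> complex" where
  "psi_HO \<theta> a b n = phi_H0 (foldr (\<lambda>m X. G_blk \<theta> (a m) (b m) X) [0..<Suc n] (mat 1))"

definition eff_a :: "nat \<Rightarrow> qop" where
  "eff_a m = mat 1"

definition eff_b :: "nat \<Rightarrow> qop" where
  "eff_b m = (if m = 0 then outer (ket 0) (ket 0) else mat 1)"

end

theory Submission
  imports Defs
begin

text \<open>Both expectations are compressions by isometries of product form, so on elementary
  tensors they are explicit: \<open>E_HO (a \<otimes> b)\<close> is the Schur product of \<open>a\<close> and \<open>b\<close>,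
  and \<open>E_H (a \<otimes> X) = X\<^sub>0\<^sub>0 \<cdot> U\<^sup>* a U\<close>. A single time step already separates the two
  states. In the conventional order the effect \<open>|e\<^sub>0\<rangle>\<langle>e\<^sub>0|\<close> is conjugated by \<open>U\<close>,
  giving \<open>|U\<^sub>0\<^sub>0|\<^sup>2 = cos\<^sup>2(\<theta>/2)\<close> in the state \<open>|0\<rangle>\<close>; in the causal order \<open>U\<close>
  only conjugates \<open>a\<^sub>0 = I\<close>, cancels by unitarity, and the effect is evaluated directly in
  \<open>|0\<rangle>\<close>, giving 1. These differ because \<open>sin(\<theta>/2) \<noteq> 0\<close> for \<open>0 < |\<theta>| < \<pi>\<close>.\<close>

lemma UNIV_2_eq: "(UNIV::2 set) = {0, 1}"
proof -
  have "(2::2) = 0" by simp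
  then show ?thesis using UNIV_2 by auto
qed

lemma forall_2_eq: "(\<forall>i::2. P i) \<longleftrightarrow> P 0 \<and> P 1"
  by (metis UNIV_2_eq UNIV_I empty_iff insert_iff)

lemma sum_UNIV_2: "(\<Sum>i\<in>(UNIV::2 set). f i) = f 0 + f 1"
  by (simp add: UNIV_2_eq)

lemma sum_UNIV_2x2:
  "(\<Sum>r\<in>(UNIV::(2\<times>2) set). f r) = f (0,0) + f (0,1) + f (1,0) + f (1,1)"
proof -
  have "(\<Sum>r\<in>(UNIV::(2\<times>2) set). f r) = (\<Sum>x\<in>UNIV. \<Sum>y\<in>UNIV. f (x, y))"
    by (simp add: sum.cartesian_product)
  then show ?thesis
    by (simp add: sum_UNIV_2 add.assoc)
qed

definition schur :: "complex^'n^'m \<Rightarrow> complex^'n^'m \<Rightarrow> complex^'n^'m" where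
  "schur A B = (\<chi> i j. A $ i $ j * B $ i $ j)"

lemma Uop_unitary: "adj (Uop \<theta>) ** Uop \<theta> = mat 1"
proof -
  have "(complex_of_real (cos (\<theta>/2)))\<^sup>2 - (\<i> * complex_of_real (sin (\<theta>/2)))\<^sup>2 = 1"
    by (simp add: power_mult_distrib flip: of_real_power of_real_add)
  then show ?thesis
    by (auto simp: vec_eq_iff forall_2_eq adj_def Uop_def sigma_x_def matrix_matrix_mult_def
        sum_UNIV_2 mat_def power2_eq_square)
qed

lemma E_HO_kron: "E_HO (kron a b) = schur a b"
  by (simp add: vec_eq_iff E_HO_def kron_def schur_def V_HO_def adj_def ket_def axis_def
      matrix_matrix_mult_def sum_UNIV_2x2 forall_2_eq)

lemma E_H_kron: "E_H \<theta> (kron a X) = (\<chi> i j. X $ 0 $ 0 * (adj (Uop \<theta>) ** a ** Uop \<theta>) $ i $ j)"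
  by (simp add: vec_eq_iff forall_2_eq E_H_def kron_def V_H_def adj_def ket_def axis_def
      matrix_matrix_mult_def sum_UNIV_2x2 sum_UNIV_2 algebra_simps)

lemma phi_H0_eq: "phi_H0 X = X $ 0 $ 0"
  by (simp add: phi_H0_def rho0_def outer_def ket_def axis_def trace_def matrix_matrix_mult_def sum_UNIV_2)

lemma varphi_HO_0:
  "varphi_HO \<theta> a b 0 = (adj (Uop \<theta>) ** schur (a 0) (b 0) ** Uop \<theta>) $ 0 $ 0"
  by (simp add: varphi_HO_def F_blk_def E_HO_kron E_H_kron phi_H0_eq mat_def)

lemma psi_HO_0:
  "psi_HO \<theta> a b 0 = (adj (Uop \<theta>) ** a 0 ** Uop \<theta>) $ 0 $ 0 * b 0 $ 0 $ 0"
  by (simp add: psi_HO_def G_blk_def E_HO_kron E_H_kron phi_H0_eq schur_def mat_def)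

lemma varphi_HO_eff_0: "varphi_HO \<theta> eff_a eff_b 0 = complex_of_real ((cos (\<theta>/2))\<^sup>2)"
proof -
  have "schur (eff_a 0) (eff_b 0) = outer (ket 0) (ket 0)"
    by (simp add: vec_eq_iff forall_2_eq schur_def eff_a_def eff_b_def outer_def ket_def axis_def mat_def)
  then show ?thesis
    by (simp add: varphi_HO_0 adj_def outer_def ket_def axis_def Uop_def sigma_x_def mat_def
        matrix_matrix_mult_def sum_UNIV_2 power2_eq_square)
qed

lemma psi_HO_eff_0: "psi_HO \<theta> eff_a eff_b 0 = 1"
  by (simp add: psi_HO_0 Uop_unitary eff_a_def eff_b_def outer_def ket_def axis_def)
    (simp add: mat_def)

theorem mainTheorem1:
  fixes \<theta> :: real
  assumes "0 < \<bar>\<theta>\<bar>" and "\<bar>\<theta>\<bar> < pi"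
  shows "\<exists>n. varphi_HO \<theta> eff_a eff_b n \<noteq> psi_HO \<theta> eff_a eff_b n"
proof
  have "sin (\<bar>\<theta>\<bar>/2) > 0"
    using assms by (intro sin_gt_zero) auto
  then have "sin (\<theta>/2) \<noteq> 0"
    by (cases "\<theta> \<ge> 0") auto
  then have "(cos (\<theta>/2))\<^sup>2 \<noteq> 1"
    by (simp add: cos_squared_eq)
  then show "varphi_HO \<theta> eff_a eff_b 0 \<noteq> psi_HO \<theta> eff_a eff_b 0"
    by (metis varphi_HO_eff_0 psi_HO_eff_0 of_real_1 of_real_eq_iff)
qed

end
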